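(* Let $\varphi=(\mathfrak{m}_1,\dots,\mathfrak{m}_\ell)$ be normalizer-adapted. Fix $1\le p\le\ell_0$ and $i\in I_p$. Then: (a) if $j\in I^+_p$ and $1\le k\le\ell$, then $[\phi_p(i)\phi_p(j)k]=[ijk]$; (b) if $j,k\in I^0_p$, then $[\phi_p(i)jk]=[ijk]$; (c) if $1\le q\le\ell_0$ with $[V_p,V_q]=0$, then $[q\,\phi_p(i)\,\phi_q(\phi_p(i))]=[q\,i\,\phi_q(i)]$.
   Context: $M=\mathsf{G}/\mathsf{H}$ almost-effective, $\mathsf{G},\mathsf{H}$ compact connected; $Q$ an $\mathrm{Ad}(\mathsf{G})$-invariant inner product on $\mathfrak{g}$, $\mathfrak{m}=\mathfrak{h}^{\perp_Q}$, $\mathfrak{m}_0=\{X\in\mathfrak{m}:[\mathfrak{h},X]=0\}$. $\varphi$ is an ordered $Q$-orthogonal decomposition of $\mathfrak{m}$ into irreducible $\mathrm{Ad}(\mathsf{H})$-modules with $\mathfrak{m}_0=\mathfrak{m}_1+\dots+\mathfrak{m}_{\ell_0}$, each $\mathfrak{m}_p$ ($p\le\ell_0$) one-dimensional, spanned by a $Q$-unit $V_p$. $[ijk]=\sum Q([e_\alpha,e_\beta],e_\gamma)^2$ over a $Q$-orthonormal adapted basis with $e_\alpha\in\mathfrak{m}_i,e_\beta\in\mathfrak{m}_j,e_\gamma\in\mathfrak{m}_k$ (symmetric in $i,j,k$). Normalizer-adapted: if $p\le\ell_0$ and $[\mathfrak{m}_p,\mathfrak{m}_i]\neq0$ then $[\mathfrak{m}_p,\mathfrak{m}_i]\cap\mathfrak{m}_j\ne0$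 for some $j$. For such $\varphi$ and $p\le\ell_0$: $I^0_p=\{i:\mathrm{ad}(V_p)|_{\mathfrak{m}_i}=0\}$, $I^+_p=\{1,\dots,\ell\}\setminus I^0_p$; for $i\in I^+_p$ there is a unique $j$ with $[pij]>0$, denoted $\phi_p(i)$, and $\phi_p(i)=i$ for $i\in I^0_p$; $I_p=\{i\in I^+_p: i<\phi_p(i)\}$. *)

theory Defs
  imports "HOL-Analysis.Analysis"
begin

text \<open>The Lie algebra g is modelled as a finite-dimensional real inner product space
  (type class euclidean_space); its inner product plays the role of Q.
  The Lie bracket is a function br.\<close>

definition lie_bracket :: "('a::euclidean_space \<Rightarrow> 'a \<Rightarrow> 'a) \<Rightarrow> bool" where
  "lie_bracket br \<longleftrightarrow> bilinear br \<and> (\<forall>x y. br x y = - br y x) \<and>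
     (\<forall>x y z. br x (br y z) + br y (br z x) + br z (br x y) = 0)"

text \<open>Q is ad-invariant: Q([x,y],z) + Q(y,[x,z]) = 0 (infinitesimal Ad(G)-invariance).\<close>
definition ad_invariant_inner :: "('a::euclidean_space \<Rightarrow> 'a \<Rightarrow> 'a) \<Rightarrow> bool" where
  "ad_invariant_inner br \<longleftrightarrow> (\<forall>x y z. inner (br x y) z + inner y (br x z) = 0)"

definition lie_subalgebra :: "('a::euclidean_space \<Rightarrow> 'a \<Rightarrow> 'a) \<Rightarrow> 'a set \<Rightarrow> bool" where
  "lie_subalgebra br h \<longleftrightarrow> subspace h \<and> (\<forall>x\<in>h. \<forall>y\<in>h. br x y \<in> h)"

definition lie_ideal :: "('a::euclidean_space \<Rightarrow> 'a \<Rightarrow> 'a) \<Rightarrow> 'a set \<Rightarrow> bool" where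
  "lie_ideal br I \<longleftrightarrow> subspace I \<and> (\<forall>x. \<forall>y\<in>I. br x y \<in> I)"

definition almost_effective :: "('a::euclidean_space \<Rightarrow> 'a \<Rightarrow> 'a) \<Rightarrow> 'a set \<Rightarrow> bool" where
  "almost_effective br h \<longleftrightarrow> (\<forall>I. lie_ideal br I \<and> I \<subseteq> h \<longrightarrow> I = {0})"

text \<open>Ad(H)-invariant subspaces (H connected: equivalently ad(h)-invariant).\<close>
definition ad_h_invariant :: "('a::euclidean_space \<Rightarrow> 'a \<Rightarrow> 'a) \<Rightarrow> 'a set \<Rightarrow> 'a set \<Rightarrow> bool" where
  "ad_h_invariant br h S \<longleftrightarrow> subspace S \<and> (\<forall>x\<in>h. \<forall>y\<in>S. br x y \<in> S)"

definition irreducible_module :: "('a::euclidean_space \<Rightarrow> 'a \<Rightarrow> 'a) \<Rightarrow> 'a set \<Rightarrow> 'a set \<Rightarrow> bool" where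
  "irreducible_module br h S \<longleftrightarrow> ad_h_invariant br h S \<and> S \<noteq> {0} \<and>
     (\<forall>W. ad_h_invariant br h W \<and> W \<subseteq> S \<longrightarrow> W = {0} \<or> W = S)"

definition mcomp :: "'a::euclidean_space set \<Rightarrow> 'a set" where
  "mcomp h = {x. \<forall>y\<in>h. inner x y = 0}"

definition mzero :: "('a::euclidean_space \<Rightarrow> 'a \<Rightarrow> 'a) \<Rightarrow> 'a set \<Rightarrow> 'a set" where
  "mzero br h = {X \<in> mcomp h. \<forall>Y\<in>h. br Y X = 0}"

definition is_onb :: "'a::euclidean_space set \<Rightarrow> 'a set \<Rightarrow> bool" where
  "is_onb B S \<longleftrightarrow> finite B \<and> B \<subseteq> S \<and> span B = S \<and> pairwise orthogonal B \<and> (\<forall>x\<in>B. norm x = 1)"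

definition onb :: "'a::euclidean_space set \<Rightarrow> 'a set" where
  "onb S = (SOME B. is_onb B S)"

text \<open>[ijk], computed w.r.t. a Q-orthonormal basis of each module (basis-independent).\<close>
definition triple :: "('a::euclidean_space \<Rightarrow> 'a \<Rightarrow> 'a) \<Rightarrow> (nat \<Rightarrow> 'a set) \<Rightarrow> nat \<Rightarrow> nat \<Rightarrow> nat \<Rightarrow> real" where
  "triple br ms i j k = (\<Sum>a\<in>onb (ms i). \<Sum>b\<in>onb (ms j). \<Sum>c\<in>onb (ms k). (inner (br a b) c)\<^sup>2)"

definition bracket_space :: "('a::euclidean_space \<Rightarrow> 'a \<Rightarrow> 'a) \<Rightarrow> 'a set \<Rightarrow> 'a set \<Rightarrow> 'a set" where
  "bracket_space br A B = span {br x y | x y. x \<in> A \<and> y \<in> B}"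

definition adapted_decomposition ::
  "('a::euclidean_space \<Rightarrow> 'a \<Rightarrow> 'a) \<Rightarrow> 'a set \<Rightarrow> nat \<Rightarrow> nat \<Rightarrow> (nat \<Rightarrow> 'a set) \<Rightarrow> (nat \<Rightarrow> 'a) \<Rightarrow> bool" where
  "adapted_decomposition br h l l0 ms V \<longleftrightarrow>
     l0 \<le> l \<and>
     (\<forall>i\<in>{1..l}. irreducible_module br h (ms i)) \<and>
     (\<forall>i\<in>{1..l}. \<forall>j\<in>{1..l}. i \<noteq> j \<longrightarrow> (\<forall>x\<in>ms i. \<forall>y\<in>ms j. inner x y = 0)) \<and>
     span (\<Union>i\<in>{1..l}. ms i) = mcomp h \<and>
     span (\<Union>i\<in>{1..l0}. ms i) = mzero br h \<and>
     (\<forall>p\<in>{1..l0}. norm (V p) = 1 \<and> ms p = span {V p})"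

definition normalizer_adapted ::
  "('a::euclidean_space \<Rightarrow> 'a \<Rightarrow> 'a) \<Rightarrow> nat \<Rightarrow> nat \<Rightarrow> (nat \<Rightarrow> 'a set) \<Rightarrow> bool" where
  "normalizer_adapted br l l0 ms \<longleftrightarrow>
     (\<forall>p\<in>{1..l0}. \<forall>i\<in>{1..l}. bracket_space br (ms p) (ms i) \<noteq> {0} \<longrightarrow>
        (\<exists>j\<in>{1..l}. bracket_space br (ms p) (ms i) \<inter> ms j \<noteq> {0}))"

definition Izero :: "('a::euclidean_space \<Rightarrow> 'a \<Rightarrow> 'a) \<Rightarrow> nat \<Rightarrow> (nat \<Rightarrow> 'a set) \<Rightarrow> (nat \<Rightarrow> 'a) \<Rightarrow> nat \<Rightarrow> nat set" where
  "Izero br l ms V p = {i\<in>{1..l}. \<forall>y\<in>ms i. br (V p) y = 0}"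

definition Iplus :: "('a::euclidean_space \<Rightarrow> 'a \<Rightarrow> 'a) \<Rightarrow> nat \<Rightarrow> (nat \<Rightarrow> 'a set) \<Rightarrow> (nat \<Rightarrow> 'a) \<Rightarrow> nat \<Rightarrow> nat set" where
  "Iplus br l ms V p = {1..l} - Izero br l ms V p"

definition phi :: "('a::euclidean_space \<Rightarrow> 'a \<Rightarrow> 'a) \<Rightarrow> nat \<Rightarrow> (nat \<Rightarrow> 'a set) \<Rightarrow> (nat \<Rightarrow> 'a) \<Rightarrow> nat \<Rightarrow> nat \<Rightarrow> nat" where
  "phi br l ms V p i = (if i \<in> Iplus br l ms V p
      then (THE j. j \<in> {1..l} \<and> triple br ms p i j > 0) else i)"

definition Ip :: "('a::euclidean_space \<Rightarrow> 'a \<Rightarrow> 'a) \<Rightarrow> nat \<Rightarrow> (nat \<Rightarrow> 'a set) \<Rightarrow> (nat \<Rightarrow> 'a) \<Rightarrow> nat \<Rightarrow> nat set" where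
  "Ip br l ms V p = {i \<in> Iplus br l ms V p. i < phi br l ms V p i}"

end

theory Submission
  imports Defs
begin

(* Fix p <= l0 and write D = ad(V_p). Since V_p centralises h, D commutes with ad(h). By
   irreducibility and the normalizer-adapted hypothesis D maps m_i into the single module
   m_phi(i), onto it when i is in I^+_p, and by Schur's lemma the symmetric operator D^2 acts on
   m_i as a scalar, which is -alpha_i < 0 for i in I^+_p since D is skew. Hence D / sqrt alpha_i
   carries orthonormal bases of m_i to orthonormal bases of m_phi(i), and the three identities
   reduce to identities between the terms Q([a,b],c)^2 of orthonormal bases:
   (a) for eigenvectors a, b, c of D^2, invariance of Q and the derivation property of D give
       Q([Da,Db],c) = kappa Q([a,b],c) with kappa depending only on the eigenvalues; since Da, Db
       are eigenvectors with the same eigenvalues, kappa^2 = alpha_i alpha_j unless Q([a,b],c) = 0;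
   (b) both sides vanish: m_i and m_phi(i) lie in the image of D, and Q([Dy,b],c) = 0 whenever
       Db = Dc = 0;
   (c) ad(V_q) commutes with D, so |ad(V_q) Da|^2 = alpha_i |ad(V_q) a|^2. *)

lemma is_onbD:
  assumes "is_onb B S"
  shows "finite B" "B \<subseteq> S" "span B = S" "pairwise orthogonal B" "\<And>x. x \<in> B \<Longrightarrow> norm x = 1"
  using assms unfolding is_onb_def by auto

lemma is_onb_subspace: "is_onb B S \<Longrightarrow> subspace S"
  by (metis is_onbD(3) subspace_span)

lemma is_onb_onb: "subspace S \<Longrightarrow> is_onb (onb S) S"
  unfolding onb_def
  by (rule someI_ex, metis orthonormal_basis_subspace independent_imp_finite is_onb_def)

lemma is_onb_inner:
  assumes "is_onb B S" "x \<in> B" "y \<in> B"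
  shows "inner x y = (if x = y then 1 else 0)"
  using is_onbD[OF assms(1)] assms(2,3)
  by (auto simp: pairwise_def orthogonal_def dot_square_norm)

lemma is_onb_expansion:
  assumes B: "is_onb B S" and y: "y \<in> S"
  shows "(\<Sum>b\<in>B. inner b y *\<^sub>R b) = y"
proof -
  let ?r = "y - (\<Sum>b\<in>B. inner b y *\<^sub>R b)"
  have "(\<Sum>b\<in>B. inner b y *\<^sub>R b) = (\<Sum>b\<in>B. (inner b y / inner b b) *\<^sub>R b)"
    using is_onbD(5)[OF B] by (intro sum.cong) (auto simp: dot_square_norm)
  then have "orthogonal x ?r" if "x \<in> span B" for x
    using Gram_Schmidt_step[OF is_onbD(4)[OF B] that] by simp
  moreover have "?r \<in> span B"
  proof (rule span_diff)
    show "y \<in> span B" using y is_onbD(3)[OF B] by simp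
    show "(\<Sum>b\<in>B. inner b y *\<^sub>R b) \<in> span B" by (intro span_sum span_scale span_base)
  qed
  ultimately show ?thesis by (metis orthogonal_self eq_iff_diff_eq_0)
qed

lemma is_onb_parseval:
  assumes "is_onb B S" "w \<in> S"
  shows "(\<Sum>b\<in>B. (inner w b)\<^sup>2) = inner w w"
proof -
  have "(\<Sum>b\<in>B. (inner w b)\<^sup>2) = inner w (\<Sum>b\<in>B. inner b w *\<^sub>R b)"
    by (simp add: inner_sum_right power2_eq_square inner_commute)
  then show ?thesis using is_onb_expansion[OF assms] by simp
qed

lemma is_onb_sum_sq_inner_indep:
  assumes A: "is_onb A S" and B: "is_onb B S"
  shows "(\<Sum>a\<in>A. (inner w a)\<^sup>2) = (\<Sum>b\<in>B. (inner w b)\<^sup>2)"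
proof -
  have S: "span S = S" using is_onb_subspace[OF A] by simp
  obtain y z where y: "y \<in> S" and z: "\<And>u. u \<in> S \<Longrightarrow> orthogonal z u" and w: "w = y + z"
    using orthogonal_subspace_decomp_exists[of S w] unfolding S by metis
  have "(\<Sum>c\<in>C. (inner w c)\<^sup>2) = inner y y" if C: "is_onb C S" for C
  proof -
    have "inner w c = inner y c" if "c \<in> C" for c
      using z[of c] is_onbD(2)[OF C] that by (auto simp: w inner_add_left orthogonal_def)
    then show ?thesis using is_onb_parseval[OF C y] by simp
  qed
  then show ?thesis using A B by simp
qed

lemma is_onb_isometric_image:
  assumes B: "is_onb B S" and f: "linear f" "f ` S = S'"
    and iso: "\<And>x y. x \<in> S \<Longrightarrow> y \<in> S \<Longrightarrow> inner (f x) (f y) = inner x y"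
  shows "is_onb (f ` B) S'" "inj_on f B"
proof -
  have iso_B: "inner (f x) (f y) = (if x = y then 1 else 0)" if "x \<in> B" "y \<in> B" for x y
    using iso[of x y] is_onb_inner[OF B that] is_onbD(2)[OF B] that by (simp add: subset_iff)
  show inj: "inj_on f B"
    by (rule inj_onI) (metis iso_B one_neq_zero)
  show "is_onb (f ` B) S'"
    unfolding is_onb_def pairwise_def orthogonal_def
    using is_onbD(1-3)[OF B] linear_span_image[OF f(1), of B] f(2) iso_B
    by (auto simp: norm_eq_sqrt_inner)
qed

lemma nonpos_if_quadratic_perturbation_nonpos:
  fixes c K :: real
  assumes "\<And>t. t > 0 \<Longrightarrow> t * c + t\<^sup>2 * K \<le> 0"
  shows "c \<le> 0"
proof (rule ccontr)
  assume "\<not> c \<le> 0"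
  define t where "t = c / (\<bar>K\<bar> + 1)"
  have t: "t > 0" and "t * \<bar>K\<bar> < c"
    using \<open>\<not> c \<le> 0\<close> by (auto simp: t_def field_simps)
  then have "0 < t * c - t\<^sup>2 * \<bar>K\<bar>" by (simp add: power2_eq_square)
  also have "\<dots> \<le> t * c + t\<^sup>2 * K"
    using mult_left_mono[OF abs_ge_minus_self[of K], of "t\<^sup>2"] by simp
  finally show False using assms[OF t] by simp
qed

lemma quadratic_form_max_on_sphere:
  fixes A :: "'a::euclidean_space \<Rightarrow> 'a"
  assumes S: "subspace S" "S \<noteq> {0}" and A: "linear A"
  obtains v where "v \<in> S" "norm v = 1" "\<And>z. z \<in> S \<Longrightarrow> inner (A z) z \<le> inner (A v) v * inner z z"
proof -
  let ?K = "S \<inter> sphere 0 1"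
  have "compact ?K"
    by (rule closed_Int_compact[OF closed_subspace[OF S(1)] compact_sphere])
  moreover obtain x where x: "x \<in> S" "x \<noteq> 0" using S subspace_0 by blast
  then have "x /\<^sub>R norm x \<in> ?K" using S(1) by (simp add: subspace_scale)
  then have "?K \<noteq> {}" by blast
  moreover have "continuous_on ?K (\<lambda>x. inner (A x) x)"
    using A by (intro continuous_intros linear_continuous_on) (simp add: linear_conv_bounded_linear)
  ultimately obtain v where v: "v \<in> ?K" and max: "\<And>y. y \<in> ?K \<Longrightarrow> inner (A y) y \<le> inner (A v) v"
    using continuous_attains_sup[of ?K "\<lambda>x. inner (A x) x"] by blast
  have "inner (A z) z \<le> inner (A v) v * inner z z" if z: "z \<in> S" for z
  proof (cases "z = 0")
    case True then show ?thesis using A by (simp add: linear_0)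
  next
    case False
    then have "z /\<^sub>R norm z \<in> ?K" using z S(1) by (simp add: subspace_scale)
    then have "inner (A z) z / (norm z * norm z) \<le> inner (A v) v"
      using max[of "z /\<^sub>R norm z"]
      by (simp add: linear_scale[OF A] power2_norm_eq_inner field_simps)
    then show ?thesis using False by (simp add: divide_le_eq dot_square_norm power2_eq_square)
  qed
  then show thesis using that v by auto
qed

lemma selfadjoint_eigenvector_exists:
  fixes A :: "'a::euclidean_space \<Rightarrow> 'a"
  assumes S: "subspace S" "S \<noteq> {0}" and A: "linear A" and inv: "\<And>x. x \<in> S \<Longrightarrow> A x \<in> S"
    and sym: "\<And>x y. inner (A x) y = inner x (A y)"
  obtains v \<mu> where "v \<in> S" "v \<noteq> 0" "A v = \<mu> *\<^sub>R v"
proof -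
  obtain v where v: "v \<in> S" "norm v = 1"
    and max: "\<And>z. z \<in> S \<Longrightarrow> inner (A z) z \<le> inner (A v) v * inner z z"
    using quadratic_form_max_on_sphere[OF S A] by blast
  define \<mu> where "\<mu> = inner (A v) v"
  define w where "w = A v - \<mu> *\<^sub>R v"
  have vv: "inner v v = 1" using v(2) by (simp add: dot_square_norm)
  have w: "w \<in> S" unfolding w_def using inv v(1) S(1) by (simp add: subspace_diff subspace_scale)
  have vw: "inner v w = 0" using vv by (simp add: w_def \<mu>_def inner_diff_right inner_commute)
  have Avw: "inner (A v) w = inner w w" and Awv: "inner (A w) v = inner w w"
    using vw sym[of w v] by (simp_all add: w_def inner_diff_left inner_diff_right inner_commute)
  \<comment> \<open>first variation of the Rayleigh quotient at its maximiser \<open>v\<close> in the direction \<open>w\<close>\<close>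
  have "t * (2 * inner w w) + t\<^sup>2 * (inner (A w) w - \<mu> * inner w w) \<le> 0" for t
  proof -
    have "v + t *\<^sub>R w \<in> S" using v(1) w S(1) by (simp add: subspace_add subspace_scale)
    from max[OF this] show ?thesis
      using Avw Awv vv vw
      by (simp add: \<mu>_def linear_add[OF A] linear_scale[OF A] inner_add_left inner_add_right
          inner_commute power2_eq_square algebra_simps)
  qed
  then have "2 * inner w w \<le> 0" by (rule nonpos_if_quadratic_perturbation_nonpos)
  then have "w = 0" using inner_ge_zero[of w] by simp
  then have "A v = \<mu> *\<^sub>R v" unfolding w_def by simp
  moreover have "v \<noteq> 0" using v(2) by auto
  ultimately show thesis using that v(1) by blast
qed

lemma nested_sum3_cong:
  assumes "\<And>b c. (\<Sum>a\<in>A1. g a b c) = (\<Sum>a\<in>A2. g a b c)"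
    and "\<And>a c. (\<Sum>b\<in>B1. g a b c) = (\<Sum>b\<in>B2. g a b c)"
    and "\<And>a b. (\<Sum>c\<in>C1. g a b c) = (\<Sum>c\<in>C2. g a b c)"
  shows "(\<Sum>a\<in>A1. \<Sum>b\<in>B1. \<Sum>c\<in>C1. g a b c) = (\<Sum>a\<in>A2. \<Sum>b\<in>B2. \<Sum>c\<in>C2. g a b c)"
proof -
  have "(\<Sum>a\<in>A1. \<Sum>b\<in>B1. \<Sum>c\<in>C1. g a b c) = (\<Sum>c\<in>C2. \<Sum>a\<in>A1. \<Sum>b\<in>B2. g a b c)"
    by (simp only: assms(2,3) sum.swap[of _ C2])
  also have "\<dots> = (\<Sum>b\<in>B2. \<Sum>c\<in>C2. \<Sum>a\<in>A2. g a b c)"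
    by (simp only: assms(1) sum.swap[of _ B2])
  also have "\<dots> = (\<Sum>a\<in>A2. \<Sum>b\<in>B2. \<Sum>c\<in>C2. g a b c)"
    by (simp only: sum.swap[of _ A2])
  finally show ?thesis .
qed

locale lie_algebra_invariant_inner =
  fixes br :: "'a::euclidean_space \<Rightarrow> 'a \<Rightarrow> 'a"
  assumes lie_bracket: "lie_bracket br" and ad_invariant: "ad_invariant_inner br"
begin

lemma bracket_bilinear: "bilinear br"
  using lie_bracket unfolding lie_bracket_def by blast

lemma bracket_linear_right: "linear (br x)"
  using bracket_bilinear unfolding bilinear_def by simp

lemma bracket_antisym: "br x y = - br y x"
  using lie_bracket unfolding lie_bracket_def by blast

lemma bracket_zero_left [simp]: "br 0 x = 0"
  by (rule bilinear_lzero[OF bracket_bilinear])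

lemma bracket_zero_right [simp]: "br x 0 = 0"
  by (rule bilinear_rzero[OF bracket_bilinear])

lemma bracket_scaleR_left [simp]: "br (c *\<^sub>R x) y = c *\<^sub>R br x y"
  by (rule bilinear_lmul[OF bracket_bilinear])

lemma bracket_scaleR_right [simp]: "br x (c *\<^sub>R y) = c *\<^sub>R br x y"
  by (rule bilinear_rmul[OF bracket_bilinear])

lemma bracket_uminus_left [simp]: "br (- x) y = - br x y"
  by (rule bilinear_lneg[OF bracket_bilinear])

lemma bracket_uminus_right [simp]: "br x (- y) = - br x y"
  by (rule bilinear_rneg[OF bracket_bilinear])

lemma ad_derivation: "br v (br x y) = br (br v x) y + br x (br v y)"
proof -
  have "br v (br x y) + br x (br y v) + br y (br v x) = 0"
    using lie_bracket unfolding lie_bracket_def by blast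
  moreover have "br x (br y v) = - br x (br v y)"
    using bracket_antisym[of y v] by simp
  moreover have "br y (br v x) = - br (br v x) y" by (rule bracket_antisym)
  ultimately show ?thesis by (simp add: algebra_simps)
qed

lemma ad_commute: "br v w = 0 \<Longrightarrow> br v (br w x) = br w (br v x)"
  using ad_derivation[of v w x] by simp

lemma inner_bracket_skew: "inner (br x y) z = - inner y (br x z)"
  using ad_invariant unfolding ad_invariant_inner_def by (simp add: eq_neg_iff_add_eq_0)

lemma inner_ad_square_symmetric: "inner (br v (br v x)) y = inner x (br v (br v y))"
  using inner_bracket_skew[of v "br v x" y] inner_bracket_skew[of v x "br v y"]
  by (simp add: inner_commute)

lemma inner_ad_derivation:
  "inner (br (br v x) y) z + inner (br x (br v y)) z + inner (br x y) (br v z) = 0"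
  using inner_bracket_skew[of v "br x y" z] unfolding ad_derivation[of v x y] inner_add_left
  by simp

lemma inner_bracket_ad_kernel:
  "br v b = 0 \<Longrightarrow> br v c = 0 \<Longrightarrow> inner (br (br v y) b) c = 0"
  using inner_ad_derivation[of v y b c] by simp

lemma inner_bracket_ad_eigen:
  assumes "br v (br v a) = \<mu>a *\<^sub>R a" "br v (br v b) = \<mu>b *\<^sub>R b" "br v (br v c) = \<mu>c *\<^sub>R c"
  shows "inner (br (br v a) (br v b)) c = (\<mu>c - \<mu>a - \<mu>b) / 2 * inner (br a b) c"
  using inner_ad_derivation[of v a b "br v c"] inner_ad_derivation[of v "br v a" b c]
    inner_ad_derivation[of v a "br v b" c] assms
  by (simp add: field_simps)

lemma inner_bracket_normalized_ad_sq:
  assumes a: "br v (br v a) = (- \<alpha>) *\<^sub>R a" and b: "br v (br v b) = (- \<beta>) *\<^sub>R b"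
    and c: "br v (br v c) = \<mu> *\<^sub>R c" and pos: "\<alpha> > 0" "\<beta> > 0"
  shows "(inner (br ((1 / sqrt \<alpha>) *\<^sub>R br v a) ((1 / sqrt \<beta>) *\<^sub>R br v b)) c)\<^sup>2
    = (inner (br a b) c)\<^sup>2"
proof -
  define \<kappa> where "\<kappa> = (\<mu> + \<alpha> + \<beta>) / 2"
  define t where "t = inner (br a b) c"
  have Dab: "inner (br (br v a) (br v b)) c = \<kappa> * t"
    using inner_bracket_ad_eigen[OF a b c] by (simp add: \<kappa>_def t_def)
  have "br v (br v (br v a)) = (- \<alpha>) *\<^sub>R br v a" "br v (br v (br v b)) = (- \<beta>) *\<^sub>R br v b"
    using a b linear_scale[OF bracket_linear_right] by simp_all
  from inner_bracket_ad_eigen[OF this c]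
  have "inner (br (br v (br v a)) (br v (br v b))) c = \<kappa> * inner (br (br v a) (br v b)) c"
    by (simp add: \<kappa>_def)
  then have eq: "\<alpha> * \<beta> * t = \<kappa> * (\<kappa> * t)"
    unfolding Dab a b by (simp add: t_def algebra_simps)
  have "(inner (br (br v a) (br v b)) c)\<^sup>2 = \<kappa> * (\<kappa> * t) * t"
    unfolding Dab by (simp add: power2_eq_square)
  also have "\<dots> = \<alpha> * \<beta> * t\<^sup>2"
    unfolding eq[symmetric] by (simp add: power2_eq_square)
  finally have "(inner (br (br v a) (br v b)) c)\<^sup>2 = \<alpha> * \<beta> * t\<^sup>2" .
  then show ?thesis
    using pos by (simp add: t_def power_mult_distrib power_divide)
qed

lemma inner_ad_commuting_ad_eigen:
  assumes "br v w = 0" and "br v (br v a) = (- \<alpha>) *\<^sub>R a"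
  shows "inner (br w (br v a)) (br w (br v a)) = \<alpha> * inner (br w a) (br w a)"
proof -
  have "inner (br w (br v a)) (br w (br v a)) = - inner (br w a) (br v (br v (br w a)))"
    using inner_bracket_skew[of v "br w a" "br v (br w a)"] ad_commute[OF assms(1)] by simp
  also have "br v (br v (br w a)) = (- \<alpha>) *\<^sub>R br w a"
    using ad_commute[OF assms(1), of "br v a"] ad_commute[OF assms(1), of a] assms(2) by simp
  finally show ?thesis by simp
qed

lemma triple_eq_onb_sums:
  assumes A: "is_onb A (ms i)" and B: "is_onb B (ms j)" and C: "is_onb C (ms k)"
  shows "triple br ms i j k = (\<Sum>a\<in>A. \<Sum>b\<in>B. \<Sum>c\<in>C. (inner (br a b) c)\<^sup>2)"
  unfolding triple_def
proof (rule nested_sum3_cong)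
  fix b c
  have "(inner (br a b) c)\<^sup>2 = (inner (br b c) a)\<^sup>2" for a
    using inner_bracket_skew[of b a c] bracket_antisym[of a b] by (simp add: inner_commute)
  then show "(\<Sum>a\<in>onb (ms i). (inner (br a b) c)\<^sup>2) = (\<Sum>a\<in>A. (inner (br a b) c)\<^sup>2)"
    using is_onb_sum_sq_inner_indep[OF is_onb_onb[OF is_onb_subspace[OF A]] A] by simp
next
  fix a c
  have "(inner (br a b) c)\<^sup>2 = (inner (br a c) b)\<^sup>2" for b
    using inner_bracket_skew[of a b c] by (simp add: inner_commute)
  then show "(\<Sum>b\<in>onb (ms j). (inner (br a b) c)\<^sup>2) = (\<Sum>b\<in>B. (inner (br a b) c)\<^sup>2)"
    using is_onb_sum_sq_inner_indep[OF is_onb_onb[OF is_onb_subspace[OF B]] B] by simp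
next
  fix a b
  show "(\<Sum>c\<in>onb (ms k). (inner (br a b) c)\<^sup>2) = (\<Sum>c\<in>C. (inner (br a b) c)\<^sup>2)"
    using is_onb_sum_sq_inner_indep[OF is_onb_onb[OF is_onb_subspace[OF C]] C] .
qed

lemma triple_eq_0_if_ad_range_kernel:
  assumes "subspace (ms i)" "subspace (ms j)" "subspace (ms k)"
    and "ms i \<subseteq> range (br v)" "\<And>b. b \<in> ms j \<Longrightarrow> br v b = 0" "\<And>c. c \<in> ms k \<Longrightarrow> br v c = 0"
  shows "triple br ms i j k = 0"
  unfolding triple_def
proof (intro sum.neutral ballI)
  fix x b c assume "x \<in> onb (ms i)" "b \<in> onb (ms j)" "c \<in> onb (ms k)"
  then have "x \<in> range (br v)" "br v b = 0" "br v c = 0"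
    using assms is_onbD(2)[OF is_onb_onb] by blast+
  then show "(inner (br x b) c)\<^sup>2 = 0" using inner_bracket_ad_kernel by auto
qed

end

locale normalizer_adapted_decomp = lie_algebra_invariant_inner br
  for br :: "'a::euclidean_space \<Rightarrow> 'a \<Rightarrow> 'a" +
  fixes h :: "'a set" and l l0 :: nat and ms :: "nat \<Rightarrow> 'a set" and V :: "nat \<Rightarrow> 'a"
  assumes adapted: "adapted_decomposition br h l l0 ms V"
    and normalizer_adapted: "normalizer_adapted br l l0 ms"
begin

abbreviation \<phi> :: "nat \<Rightarrow> nat \<Rightarrow> nat" where "\<phi> \<equiv> phi br l ms V"

lemma irreducible_ms: "k \<in> {1..l} \<Longrightarrow> irreducible_module br h (ms k)"
  using adapted unfolding adapted_decomposition_def by blast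

lemma subspace_ms: "k \<in> {1..l} \<Longrightarrow> subspace (ms k)"
  using irreducible_ms unfolding irreducible_module_def ad_h_invariant_def by blast

lemma is_onb_onb_ms: "k \<in> {1..l} \<Longrightarrow> is_onb (onb (ms k)) (ms k)"
  by (rule is_onb_onb[OF subspace_ms])

lemma onb_ms_subset: "k \<in> {1..l} \<Longrightarrow> onb (ms k) \<subseteq> ms k"
  by (rule is_onbD(2)[OF is_onb_onb_ms])

lemma ms_ad_h_closed: "k \<in> {1..l} \<Longrightarrow> Y \<in> h \<Longrightarrow> y \<in> ms k \<Longrightarrow> br Y y \<in> ms k"
  using irreducible_ms unfolding irreducible_module_def ad_h_invariant_def by blast

lemma ms_orthogonal:
  "k \<in> {1..l} \<Longrightarrow> k' \<in> {1..l} \<Longrightarrow> k \<noteq> k' \<Longrightarrow> x \<in> ms k \<Longrightarrow> y \<in> ms k' \<Longrightarrow> inner x y = 0"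
  using adapted unfolding adapted_decomposition_def by blast

lemma ms_eq_if_ad_h_invariant:
  assumes "k \<in> {1..l}" "subspace W" "\<And>Y y. Y \<in> h \<Longrightarrow> y \<in> W \<Longrightarrow> br Y y \<in> W" "W \<subseteq> ms k"
    and "w \<in> W" "w \<noteq> 0"
  shows "W = ms k"
  using irreducible_ms[OF assms(1)] assms(2-6)
  unfolding irreducible_module_def ad_h_invariant_def by blast

lemma ms_eq_span_V: "p \<in> {1..l0} \<Longrightarrow> ms p = span {V p}"
  using adapted unfolding adapted_decomposition_def by blast

lemma is_onb_V: "p \<in> {1..l0} \<Longrightarrow> is_onb {V p} (ms p)"
  using adapted ms_eq_span_V unfolding adapted_decomposition_def is_onb_def
  by (auto intro: span_base)

lemma bracket_h_V:
  assumes "p \<in> {1..l0}" "Y \<in> h"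
  shows "br Y (V p) = 0"
proof -
  have "V p \<in> span (\<Union>i\<in>{1..l0}. ms i)"
    using assms ms_eq_span_V by (blast intro: span_base)
  then show ?thesis
    using adapted assms(2) unfolding adapted_decomposition_def mzero_def by blast
qed

lemma ad_V_commute_ad_h: "p \<in> {1..l0} \<Longrightarrow> Y \<in> h \<Longrightarrow> br (V p) (br Y x) = br Y (br (V p) x)"
  using ad_commute[of Y "V p" x] bracket_h_V by simp

lemma Iplus_iff: "k \<in> Iplus br l ms V p \<longleftrightarrow> k \<in> {1..l} \<and> (\<exists>y\<in>ms k. br (V p) y \<noteq> 0)"
  unfolding Iplus_def Izero_def by auto

lemma Izero_iff: "k \<in> Izero br l ms V p \<longleftrightarrow> k \<in> {1..l} \<and> (\<forall>y\<in>ms k. br (V p) y = 0)"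
  unfolding Izero_def by auto

lemma bracket_space_V:
  assumes p: "p \<in> {1..l0}" and k: "k \<in> {1..l}"
  shows "bracket_space br (ms p) (ms k) = br (V p) ` ms k"
proof
  have "br (c *\<^sub>R V p) y \<in> br (V p) ` ms k" if "y \<in> ms k" for c y
    using that subspace_scale[OF subspace_ms[OF k]] by (auto intro!: image_eqI[of _ _ "c *\<^sub>R y"])
  then show "bracket_space br (ms p) (ms k) \<subseteq> br (V p) ` ms k"
    unfolding bracket_space_def ms_eq_span_V[OF p] span_singleton
    by (intro span_minimal linear_subspace_image[OF bracket_linear_right subspace_ms[OF k]]) auto
  show "br (V p) ` ms k \<subseteq> bracket_space br (ms p) (ms k)"
    unfolding bracket_space_def ms_eq_span_V[OF p] by (blast intro: span_base)
qed

lemma ad_V_maps_ms_into_ms: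
  assumes p: "p \<in> {1..l0}" and k: "k \<in> Iplus br l ms V p"
  obtains j where "j \<in> {1..l}" "br (V p) ` ms k \<subseteq> ms j"
proof -
  let ?D = "br (V p)"
  let ?W = "\<lambda>j. {x \<in> ms k. ?D x \<in> ms j}"
  have k1: "k \<in> {1..l}" using k Iplus_iff by blast
  have "bracket_space br (ms p) (ms k) \<noteq> {0}"
    using k unfolding bracket_space_V[OF p k1] Iplus_iff by blast
  then obtain j where j: "j \<in> {1..l}" and "?D ` ms k \<inter> ms j \<noteq> {0}"
    using normalizer_adapted p k1 bracket_space_V[OF p k1] unfolding normalizer_adapted_def by metis
  moreover have "0 \<in> ?D ` ms k \<inter> ms j"
    using subspace_0[OF subspace_ms[OF j]] subspace_0[OF subspace_ms[OF k1]] by force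
  ultimately obtain y where y: "y \<in> ms k" "?D y \<in> ms j" "?D y \<noteq> 0"
    by blast
  have "?W j = ms k"
  proof (rule ms_eq_if_ad_h_invariant[OF k1])
    have "?W j = ms k \<inter> ?D -` ms j" by auto
    then show "subspace (?W j)"
      using subspace_inter[OF subspace_ms[OF k1]
          linear_subspace_vimage[OF bracket_linear_right subspace_ms[OF j]]] by simp
    show "br Y x \<in> ?W j" if "Y \<in> h" "x \<in> ?W j" for Y x
      using that ms_ad_h_closed[OF k1] ms_ad_h_closed[OF j] ad_V_commute_ad_h[OF p that(1)] by simp
    show "y \<in> ?W j" "y \<noteq> 0" using y by auto
  qed auto
  then show thesis using that j by blast
qed

lemma triple_V_eq_sum_sq_norm:
  assumes p: "p \<in> {1..l0}" and j: "j \<in> {1..l}" and into: "br (V p) ` ms k \<subseteq> ms j"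
    and B: "is_onb B (ms k)"
  shows "triple br ms p k j = (\<Sum>x\<in>B. inner (br (V p) x) (br (V p) x))"
proof -
  have "triple br ms p k j = (\<Sum>x\<in>B. \<Sum>c\<in>onb (ms j). (inner (br (V p) x) c)\<^sup>2)"
    using triple_eq_onb_sums[OF is_onb_V[OF p] B is_onb_onb_ms[OF j]] by simp
  also have "\<dots> = (\<Sum>x\<in>B. inner (br (V p) x) (br (V p) x))"
    using is_onb_parseval[OF is_onb_onb_ms[OF j]] is_onbD(2)[OF B] into
    by (intro sum.cong) auto
  finally show ?thesis .
qed

lemma sum_sq_norm_ad_V_pos:
  assumes "k \<in> Iplus br l ms V p"
  shows "(\<Sum>x\<in>onb (ms k). inner (br (V p) x) (br (V p) x)) > 0"
proof -
  have k1: "k \<in> {1..l}" using assms Iplus_iff by blast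
  note B = is_onb_onb_ms[OF k1]
  have "\<exists>x\<in>onb (ms k). br (V p) x \<noteq> 0"
  proof (rule ccontr)
    assume "\<not> ?thesis"
    then have "br (V p) y = 0" if "y \<in> span (onb (ms k))" for y
      using linear_eq_0_on_span[OF bracket_linear_right _ that] by blast
    then show False using assms is_onbD(3)[OF B] Iplus_iff by auto
  qed
  then show ?thesis
    using is_onbD(1)[OF B] by (auto intro: sum_pos2)
qed

lemma phi_eq:
  assumes p: "p \<in> {1..l0}" and k: "k \<in> Iplus br l ms V p"
    and j: "j \<in> {1..l}" and into: "br (V p) ` ms k \<subseteq> ms j"
  shows "\<phi> p k = j"
proof -
  have k1: "k \<in> {1..l}" using k Iplus_iff by blast
  have pos: "triple br ms p k j > 0"
    using triple_V_eq_sum_sq_norm[OF p j into is_onb_onb_ms[OF k1]] sum_sq_norm_ad_V_pos[OF k]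
    by simp
  have zero: "triple br ms p k j' = 0" if j': "j' \<in> {1..l}" "j' \<noteq> j" for j'
  proof -
    have "inner (br (V p) x) c = 0" if "x \<in> onb (ms k)" "c \<in> onb (ms j')" for x c
    proof (rule ms_orthogonal[OF j j'(1) j'(2)[symmetric]])
      show "br (V p) x \<in> ms j" using into onb_ms_subset[OF k1] that(1) by blast
      show "c \<in> ms j'" using onb_ms_subset[OF j'(1)] that(2) by blast
    qed
    then show ?thesis
      unfolding triple_eq_onb_sums[OF is_onb_V[OF p] is_onb_onb_ms[OF k1] is_onb_onb_ms[OF j'(1)]]
      by simp
  qed
  have "(THE j'. j' \<in> {1..l} \<and> triple br ms p k j' > 0) = j"
  proof (rule the_equality)
    show "j \<in> {1..l} \<and> triple br ms p k j > 0" using j pos by simp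
    show "j' = j" if "j' \<in> {1..l} \<and> triple br ms p k j' > 0" for j'
      using that zero by (metis less_irrefl)
  qed
  then show ?thesis using k unfolding phi_def by simp
qed

lemma phi_mem_and_ad_V_maps:
  assumes p: "p \<in> {1..l0}" and k: "k \<in> {1..l}"
  shows "\<phi> p k \<in> {1..l}" "br (V p) ` ms k \<subseteq> ms (\<phi> p k)"
proof -
  have "\<phi> p k \<in> {1..l} \<and> br (V p) ` ms k \<subseteq> ms (\<phi> p k)"
  proof (cases "k \<in> Iplus br l ms V p")
    case True
    then obtain j where "j \<in> {1..l}" "br (V p) ` ms k \<subseteq> ms j"
      using ad_V_maps_ms_into_ms[OF p] by blast
    then show ?thesis using phi_eq[OF p True] by simp
  next
    case False
    then show ?thesis
      using k subspace_0[OF subspace_ms[OF k]] unfolding phi_def Iplus_iff by auto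
  qed
  then show "\<phi> p k \<in> {1..l}" "br (V p) ` ms k \<subseteq> ms (\<phi> p k)" by auto
qed

lemma ad_V_image_ms:
  assumes p: "p \<in> {1..l0}" and k: "k \<in> Iplus br l ms V p"
  shows "br (V p) ` ms k = ms (\<phi> p k)"
proof -
  have k1: "k \<in> {1..l}" using k Iplus_iff by blast
  obtain y where y: "y \<in> ms k" "br (V p) y \<noteq> 0" using k Iplus_iff by blast
  show ?thesis
  proof (rule ms_eq_if_ad_h_invariant[OF phi_mem_and_ad_V_maps(1)[OF p k1]])
    show "subspace (br (V p) ` ms k)"
      by (rule linear_subspace_image[OF bracket_linear_right subspace_ms[OF k1]])
    show "br Y z \<in> br (V p) ` ms k" if "Y \<in> h" "z \<in> br (V p) ` ms k" for Y z
      using that ms_ad_h_closed[OF k1] ad_V_commute_ad_h[OF p, symmetric] by blast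
    show "br (V p) y \<in> br (V p) ` ms k" using y(1) by blast
  qed (use y phi_mem_and_ad_V_maps(2)[OF p k1] in auto)
qed

lemma ad_V_square_ms:
  assumes p: "p \<in> {1..l0}" and k: "k \<in> {1..l}" and x: "x \<in> ms k"
  shows "br (V p) (br (V p) x) \<in> ms k"
proof (cases "k \<in> Iplus br l ms V p")
  case False
  then have "br (V p) x = 0" using k x Iplus_iff by blast
  then show ?thesis using subspace_0[OF subspace_ms[OF k]] by simp
next
  case True
  let ?D = "br (V p)"
  let ?k2 = "\<phi> p (\<phi> p k)"
  have k1: "\<phi> p k \<in> {1..l}" by (rule phi_mem_and_ad_V_maps(1)[OF p k])
  have k2: "?k2 \<in> {1..l}" by (rule phi_mem_and_ad_V_maps(1)[OF p k1])
  have into: "?D (?D y) \<in> ms ?k2" if "y \<in> ms k" for y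
    using phi_mem_and_ad_V_maps(2)[OF p k] phi_mem_and_ad_V_maps(2)[OF p k1] that by blast
  obtain y where y: "y \<in> ms k" "?D y \<noteq> 0" using True Iplus_iff by blast
  have "?k2 = k"
  proof (rule ccontr)
    assume "?k2 \<noteq> k"
    then have "inner (?D (?D y)) y = 0" by (rule ms_orthogonal[OF k2 k _ into[OF y(1)] y(1)])
    moreover have "inner (?D (?D y)) y = - inner (?D y) (?D y)"
      using inner_bracket_skew[of "V p" "?D y" y] by (simp add: inner_commute)
    ultimately show False using y(2) by simp
  qed
  then show ?thesis using into[OF x] by simp
qed

lemma ad_V_square_scalar:
  assumes p: "p \<in> {1..l0}" and k: "k \<in> {1..l}"
  obtains \<mu> where "\<And>x. x \<in> ms k \<Longrightarrow> br (V p) (br (V p) x) = \<mu> *\<^sub>R x"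
proof -
  let ?A = "\<lambda>x. br (V p) (br (V p) x)"
  have A: "linear ?A"
    using linear_compose[OF bracket_linear_right bracket_linear_right] by (simp add: o_def)
  have "ms k \<noteq> {0}" using irreducible_ms[OF k] unfolding irreducible_module_def by blast
  then obtain v \<mu> where v: "v \<in> ms k" "v \<noteq> 0" "?A v = \<mu> *\<^sub>R v"
    by (rule selfadjoint_eigenvector_exists[OF subspace_ms[OF k] _ A ad_V_square_ms[OF p k]
          inner_ad_square_symmetric])
  let ?W = "{x \<in> ms k. ?A x - \<mu> *\<^sub>R x = 0}"
  have "?W = ms k"
  proof (rule ms_eq_if_ad_h_invariant[OF k])
    have "linear (\<lambda>x. ?A x - \<mu> *\<^sub>R x)"
      by (intro linear_compose_sub A linear_scale_self)
    from linear_subspace_kernel[OF this] have "subspace (ms k \<inter> {x. ?A x - \<mu> *\<^sub>R x = 0})"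
      by (intro subspace_inter subspace_ms[OF k])
    then show "subspace ?W" by (simp add: Int_def)
    show "br Y x \<in> ?W" if Y: "Y \<in> h" and x: "x \<in> ?W" for Y x
    proof -
      have "?A (br Y x) = br Y (?A x)" using ad_V_commute_ad_h[OF p Y] by simp
      also have "\<dots> = \<mu> *\<^sub>R br Y x" using x by simp
      finally show ?thesis using ms_ad_h_closed[OF k Y] x by simp
    qed
  qed (use v in auto)
  then show thesis using that by auto
qed

lemma ad_V_square_negative:
  assumes p: "p \<in> {1..l0}" and k: "k \<in> Iplus br l ms V p"
  obtains \<alpha> where "\<alpha> > 0" "\<And>x. x \<in> ms k \<Longrightarrow> br (V p) (br (V p) x) = (- \<alpha>) *\<^sub>R x"
proof -
  let ?D = "br (V p)"
  have k1: "k \<in> {1..l}" using k Iplus_iff by blast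
  obtain \<mu> where \<mu>: "\<And>x. x \<in> ms k \<Longrightarrow> ?D (?D x) = \<mu> *\<^sub>R x"
    using ad_V_square_scalar[OF p k1] by blast
  obtain y where y: "y \<in> ms k" "?D y \<noteq> 0" using k Iplus_iff by blast
  have "\<mu> * inner y y = - inner (?D y) (?D y)"
    using \<mu>[OF y(1)] inner_bracket_skew[of "V p" "?D y" y] by (simp add: inner_commute)
  moreover have "inner (?D y) (?D y) > 0" using y(2) by simp
  ultimately have "\<mu> * inner y y < 0" by linarith
  moreover have "inner y y > 0" using y(2) by auto
  ultimately have "\<mu> < 0" by (simp add: mult_less_0_iff)
  then show thesis using that[of "- \<mu>"] \<mu> by simp
qed

lemma normalized_ad_V_onb:
  assumes p: "p \<in> {1..l0}" and k: "k \<in> Iplus br l ms V p"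
    and \<alpha>: "\<alpha> > 0" "\<And>x. x \<in> ms k \<Longrightarrow> br (V p) (br (V p) x) = (- \<alpha>) *\<^sub>R x"
  shows "is_onb ((\<lambda>x. (1 / sqrt \<alpha>) *\<^sub>R br (V p) x) ` onb (ms k)) (ms (\<phi> p k))"
    and "inj_on (\<lambda>x. (1 / sqrt \<alpha>) *\<^sub>R br (V p) x) (onb (ms k))"
proof -
  let ?D = "br (V p)"
  let ?J = "\<lambda>x. (1 / sqrt \<alpha>) *\<^sub>R ?D x"
  have k1: "k \<in> {1..l}" using k Iplus_iff by blast
  have "linear ?J"
    using linear_compose[OF bracket_linear_right linear_scale_self] by (simp add: o_def)
  moreover have "?J ` ms k = ms (\<phi> p k)"
  proof
    show "?J ` ms k \<subseteq> ms (\<phi> p k)"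
      using ad_V_image_ms[OF p k] subspace_scale[OF subspace_ms[OF phi_mem_and_ad_V_maps(1)[OF p k1]]]
      by blast
    show "ms (\<phi> p k) \<subseteq> ?J ` ms k"
    proof
      fix y assume "y \<in> ms (\<phi> p k)"
      then obtain x where x: "x \<in> ms k" "y = ?D x" using ad_V_image_ms[OF p k] by blast
      then have "y = ?J (sqrt \<alpha> *\<^sub>R x)" using \<alpha>(1) by simp
      moreover have "sqrt \<alpha> *\<^sub>R x \<in> ms k" using subspace_scale[OF subspace_ms[OF k1] x(1)] .
      ultimately show "y \<in> ?J ` ms k" by blast
    qed
  qed
  moreover have "inner (?J x) (?J y) = inner x y" if "x \<in> ms k" "y \<in> ms k" for x y
    using inner_bracket_skew[of "V p" x "?D y"] \<alpha> that by simp
  ultimately show "is_onb (?J ` onb (ms k)) (ms (\<phi> p k))" "inj_on ?J (onb (ms k))"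
    using is_onb_isometric_image[OF is_onb_onb_ms[OF k1]] by blast+
qed

lemma triple_phi_phi:
  assumes p: "p \<in> {1..l0}" and i: "i \<in> Iplus br l ms V p" and j: "j \<in> Iplus br l ms V p"
    and k: "k \<in> {1..l}"
  shows "triple br ms (\<phi> p i) (\<phi> p j) k = triple br ms i j k"
proof -
  let ?D = "br (V p)"
  let ?g = "\<lambda>a b c. (inner (br a b) c)\<^sup>2"
  obtain \<alpha> where \<alpha>: "\<alpha> > 0" "\<And>x. x \<in> ms i \<Longrightarrow> ?D (?D x) = (- \<alpha>) *\<^sub>R x"
    using ad_V_square_negative[OF p i] by blast
  obtain \<beta> where \<beta>: "\<beta> > 0" "\<And>x. x \<in> ms j \<Longrightarrow> ?D (?D x) = (- \<beta>) *\<^sub>R x"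
    using ad_V_square_negative[OF p j] by blast
  obtain \<mu> where \<mu>: "\<And>x. x \<in> ms k \<Longrightarrow> ?D (?D x) = \<mu> *\<^sub>R x"
    using ad_V_square_scalar[OF p k] by blast
  let ?Ji = "\<lambda>x. (1 / sqrt \<alpha>) *\<^sub>R ?D x" and ?Jj = "\<lambda>x. (1 / sqrt \<beta>) *\<^sub>R ?D x"
  note Ji = normalized_ad_V_onb[OF p i \<alpha>] and Jj = normalized_ad_V_onb[OF p j \<beta>]
  have i1: "i \<in> {1..l}" and j1: "j \<in> {1..l}" using i j Iplus_iff by blast+
  have "triple br ms (\<phi> p i) (\<phi> p j) k
      = (\<Sum>x\<in>?Ji ` onb (ms i). \<Sum>y\<in>?Jj ` onb (ms j). \<Sum>c\<in>onb (ms k). ?g x y c)"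
    by (rule triple_eq_onb_sums[OF Ji(1) Jj(1) is_onb_onb_ms[OF k]])
  also have "\<dots> = (\<Sum>a\<in>onb (ms i). \<Sum>b\<in>onb (ms j). \<Sum>c\<in>onb (ms k). ?g (?Ji a) (?Jj b) c)"
    by (simp only: sum.reindex[OF Ji(2)] sum.reindex[OF Jj(2)] o_def)
  also have "\<dots> = (\<Sum>a\<in>onb (ms i). \<Sum>b\<in>onb (ms j). \<Sum>c\<in>onb (ms k). ?g a b c)"
    using inner_bracket_normalized_ad_sq[OF \<alpha>(2) \<beta>(2) \<mu> \<alpha>(1) \<beta>(1)]
      onb_ms_subset[OF i1] onb_ms_subset[OF j1] onb_ms_subset[OF k]
    by (intro sum.cong refl) blast
  also have "\<dots> = triple br ms i j k" unfolding triple_def ..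
  finally show ?thesis .
qed

lemma triple_phi_Izero:
  assumes p: "p \<in> {1..l0}" and i: "i \<in> Iplus br l ms V p"
    and j: "j \<in> Izero br l ms V p" and k: "k \<in> Izero br l ms V p"
  shows "triple br ms (\<phi> p i) j k = triple br ms i j k"
proof -
  let ?D = "br (V p)"
  have i1: "i \<in> {1..l}" and j1: "j \<in> {1..l}" and k1: "k \<in> {1..l}"
    using i j k Iplus_iff Izero_iff by blast+
  have j0: "\<And>b. b \<in> ms j \<Longrightarrow> ?D b = 0" and k0: "\<And>c. c \<in> ms k \<Longrightarrow> ?D c = 0"
    using j k Izero_iff by blast+
  obtain \<alpha> where \<alpha>: "\<alpha> > 0" "\<And>x. x \<in> ms i \<Longrightarrow> ?D (?D x) = (- \<alpha>) *\<^sub>R x"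
    using ad_V_square_negative[OF p i] by blast
  have "x = ?D ((- 1 / \<alpha>) *\<^sub>R ?D x)" if "x \<in> ms i" for x
    using \<alpha> that by simp
  then have "triple br ms i j k = 0"
    by (intro triple_eq_0_if_ad_range_kernel[OF subspace_ms[OF i1] subspace_ms[OF j1]
          subspace_ms[OF k1] _ j0 k0]) blast
  moreover have "triple br ms (\<phi> p i) j k = 0"
    using ad_V_image_ms[OF p i]
    by (intro triple_eq_0_if_ad_range_kernel[OF subspace_ms[OF phi_mem_and_ad_V_maps(1)[OF p i1]]
          subspace_ms[OF j1] subspace_ms[OF k1] _ j0 k0]) blast
  ultimately show ?thesis by simp
qed

lemma triple_commuting_phi:
  assumes p: "p \<in> {1..l0}" and q: "q \<in> {1..l0}" and pq: "br (V p) (V q) = 0"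
    and i: "i \<in> Iplus br l ms V p"
  shows "triple br ms q (\<phi> p i) (\<phi> q (\<phi> p i)) = triple br ms q i (\<phi> q i)"
proof -
  let ?D = "br (V p)" and ?E = "br (V q)"
  have i1: "i \<in> {1..l}" using i Iplus_iff by blast
  have i'1: "\<phi> p i \<in> {1..l}" by (rule phi_mem_and_ad_V_maps(1)[OF p i1])
  obtain \<alpha> where \<alpha>: "\<alpha> > 0" "\<And>x. x \<in> ms i \<Longrightarrow> ?D (?D x) = (- \<alpha>) *\<^sub>R x"
    using ad_V_square_negative[OF p i] by blast
  let ?J = "\<lambda>x. (1 / sqrt \<alpha>) *\<^sub>R ?D x"
  note J = normalized_ad_V_onb[OF p i \<alpha>]
  have "triple br ms q (\<phi> p i) (\<phi> q (\<phi> p i)) = (\<Sum>x\<in>?J ` onb (ms i). inner (?E x) (?E x))"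
    by (rule triple_V_eq_sum_sq_norm[OF q phi_mem_and_ad_V_maps[OF q i'1] J(1)])
  also have "\<dots> = (\<Sum>a\<in>onb (ms i). inner (?E (?J a)) (?E (?J a)))"
    by (simp add: sum.reindex[OF J(2)])
  also have "\<dots> = (\<Sum>a\<in>onb (ms i). inner (?E a) (?E a))"
    using inner_ad_commuting_ad_eigen[OF pq \<alpha>(2)] onb_ms_subset[OF i1] \<alpha>(1)
    by (intro sum.cong refl) auto
  also have "\<dots> = triple br ms q i (\<phi> q i)"
    by (rule triple_V_eq_sum_sq_norm[OF q phi_mem_and_ad_V_maps[OF q i1] is_onb_onb_ms[OF i1], symmetric])
  finally show ?thesis .
qed

end

theorem lemma5p4:
  fixes br :: "'a::euclidean_space \<Rightarrow> 'a \<Rightarrow> 'a"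
    and h :: "'a set" and l l0 :: nat and ms :: "nat \<Rightarrow> 'a set" and V :: "nat \<Rightarrow> 'a"
    and p i :: nat
  assumes "lie_bracket br" and "ad_invariant_inner br"
    and "lie_subalgebra br h" and "almost_effective br h"
    and "adapted_decomposition br h l l0 ms V"
    and "normalizer_adapted br l l0 ms"
    and "p \<in> {1..l0}" and "i \<in> Ip br l ms V p"
  shows "(\<forall>j\<in>Iplus br l ms V p. \<forall>k\<in>{1..l}.
            triple br ms (phi br l ms V p i) (phi br l ms V p j) k = triple br ms i j k)
       \<and> (\<forall>j\<in>Izero br l ms V p. \<forall>k\<in>Izero br l ms V p.
            triple br ms (phi br l ms V p i) j k = triple br ms i j k)
       \<and> (\<forall>q\<in>{1..l0}. br (V p) (V q) = 0 \<longrightarrow>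
            triple br ms q (phi br l ms V p i) (phi br l ms V q (phi br l ms V p i))
              = triple br ms q i (phi br l ms V q i))"
proof -
  interpret normalizer_adapted_decomp br h l l0 ms V
    by unfold_locales (use assms in auto)
  have i: "i \<in> Iplus br l ms V p" using assms(8) unfolding Ip_def by blast
  show ?thesis
    using triple_phi_phi[OF assms(7) i] triple_phi_Izero[OF assms(7) i]
      triple_commuting_phi[OF assms(7) _ _ i] by blast
qed

end
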